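(* For each $j\in\{1,2,3\}$ there exists $K_j\in\mathbb{N}$ such that for all $k\ge K_j$, $$C(k)B(k)<e^\gamma D(k),$$ where $$B(k)=\prod_{\substack{1\le\ell\le k+1\\ \ell\ne j}}\frac{p_\ell^2}{p_\ell^2-1},$$ $$C(k)=\log\big((k+1)(\log(k+1)+\log\log(k+1))\big)\exp\!\left(c_1-\frac1{p_j}+\frac{5}{\log\big((k+1)(\log(k+1)+\log\log(k+1)-1)\big)}\right),$$ $$D(k)=\log\Big((k+1)\big(\log(k+1)+\log\log(k+1)-1\big)\log(2.51)-\log(p_j)\Big).$$ Consequently, for $k\ge\max(K_j,99)$ and $m=p_1\cdots p_{k+1}/p_j$, one has $C(k)B(k)<e^\gamma\log(\log m)$.
   Context: $p_1=2<p_2=3<\cdots$ is the increasing enumeration of the primes; $\gamma$ is the Euler–Mascheroni constant; $c_1\approx0.261497$ is the Meissel–Mertens constant, $c_1=\lim_{x\to\infty}\big(\sum_{p\le x}1/p-\log\log x\big)$. *)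

theory Defs
  imports "HOL-Analysis.Analysis" "HOL-Computational_Algebra.Primes" "HOL-Library.Infinite_Set"
begin

text \<open>The l-th prime, indexed from 1: pr 1 = 2, pr 2 = 3, ... (pr 0 is not used).\<close>
definition pr :: "nat \<Rightarrow> nat" where
  "pr l = enumerate {p. prime p} (l - 1)"

definition mertens_c1 :: real where
  "mertens_c1 = Lim at_top (\<lambda>x::real. (\<Sum>p\<in>{p::nat. prime p \<and> real p \<le> x}. 1 / real p) - ln (ln x))"

definition Bk :: "nat \<Rightarrow> nat \<Rightarrow> real" where
  "Bk j k = (\<Prod>l\<in>{1..k+1} - {j}. (real (pr l))^2 / ((real (pr l))^2 - 1))"

definition Ck :: "nat \<Rightarrow> nat \<Rightarrow> real" where
  "Ck j k = ln (real (k+1) * (ln (real (k+1)) + ln (ln (real (k+1)))))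
     * exp (mertens_c1 - 1 / real (pr j)
            + 5 / ln (real (k+1) * (ln (real (k+1)) + ln (ln (real (k+1))) - 1)))"

definition Dk :: "nat \<Rightarrow> nat \<Rightarrow> real" where
  "Dk j k = ln (real (k+1) * (ln (real (k+1)) + ln (ln (real (k+1))) - 1) * ln (2.51)
               - ln (real (pr j)))"

end

theory Submission
  imports Defs "HOL-Number_Theory.Number_Theory" "HOL-Real_Asymp.Real_Asymp" "HOL-Library.Discrete_Functions"
begin

text \<open>
  Since \<open>C(k) = exp (c\<^sub>1 - 1/p\<^sub>j) log (k log k) (1 + o(1))\<close>, \<open>D(k) = log (k log k) + O(1)\<close> and
  \<open>log log m \<ge> log (k log 2)\<close>, both claims follow once \<open>exp (c\<^sub>1 - 1/p\<^sub>j) B(k) \<le> 0.99 e\<^sup>\<gamma>\<close> for all \<open>k\<close>.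
  In \<open>B(k)\<close> we replace \<open>p\<^sub>\<ell>\<close> by the lower bound \<open>2\<ell> - 1\<close>; beyond the tenth factor the product
  then telescopes to at most \<open>exp (1/40)\<close>. For \<open>c\<^sub>1\<close> we show
  \<open>c\<^sub>1 \<le> \<gamma> - \<Sum>\<^sub>p\<^sub>\<in>\<^sub>S (-log (1 - 1/p) - 1/p)\<close> for every finite set \<open>S\<close> of primes and take \<open>S = {p \<le> 23}\<close>.

  That bound rests on Mertens' theorems, proved from Chebyshev's estimate \<open>\<psi>(n) \<le> 4 n log 2\<close> by
  Abel summation. Let \<open>\<Delta>(n)\<close> be \<open>\<Sum>\<^sub>p\<^sub>\<le>\<^sub>n 1/p\<close> minus \<open>H(\<lfloor>log\<^sub>2 n\<rfloor>)\<close>, the partial sums of a sequence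
  carried by the powers of two; then \<open>\<Delta>(n) \<rightarrow> c\<^sub>1 - \<gamma> + log log 2\<close>. By an Abelian theorem the
  Dirichlet series \<open>\<Sum> (\<Delta>(d) - \<Delta>(d-1)) d\<^sup>-\<^sup>\<delta>\<close> has the same limit as \<open>\<delta> \<rightarrow> 0\<close>. But it equals
  \<open>\<Sum>\<^sub>p p\<^sup>-\<^sup>1\<^sup>-\<^sup>\<delta> + log (1 - 2\<^sup>-\<^sup>\<delta>)\<close>, and the Euler product gives
  \<open>\<Sum>\<^sub>p p\<^sup>-\<^sup>1\<^sup>-\<^sup>\<delta> \<le> log \<zeta>(1+\<delta>) - \<Sum>\<^sub>p\<^sub>\<in>\<^sub>S (-log (1 - p\<^sup>-\<^sup>1\<^sup>-\<^sup>\<delta>) - p\<^sup>-\<^sup>1\<^sup>-\<^sup>\<delta>)\<close> with \<open>\<zeta>(1+\<delta>) \<le> 1 + 1/\<delta>\<close>,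
  while \<open>log (1 + 1/\<delta>) + log (1 - 2\<^sup>-\<^sup>\<delta>) \<rightarrow> log log 2\<close>.
\<close>

section \<open>Chebyshev's bound and Mertens' first theorem\<close>

lemma real_div_nat_bounds:
  assumes "d > 0"
  shows "real n / real d - 1 \<le> real (n div d)" "real (n div d) \<le> real n / real d"
proof -
  have "real n = real d * real (n div d) + real (n mod d)"
    by (metis mult_div_mod_eq of_nat_add of_nat_mult)
  moreover have "real (n mod d) < real d" using assms by simp
  ultimately show "real n / real d - 1 \<le> real (n div d)" "real (n div d) \<le> real n / real d"
    using assms by (simp_all add: field_simps)
qed

lemma sum_divisor_sums:
  fixes f :: "nat \<Rightarrow> real"
  shows "(\<Sum>m=1..n. \<Sum>d | d dvd m. f d) = (\<Sum>d=1..n. f d * real (n div d))"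
proof (induction n)
  case 0 then show ?case by simp
next
  case (Suc n)
  have divisors: "{d. d dvd Suc n} = {d\<in>{1..Suc n}. d dvd Suc n}"
    by (auto simp: dvd_imp_le Suc_le_eq) (metis gr0I dvd_0_left_iff Zero_not_Suc)
  have "(\<Sum>d | d dvd Suc n. f d) = (\<Sum>d=1..Suc n. if d dvd Suc n then f d else 0)"
    unfolding divisors by (rule sum.inter_filter) simp
  then have "(\<Sum>m=1..Suc n. \<Sum>d | d dvd m. f d)
      = (\<Sum>d=1..Suc n. f d * real (n div d)) + (\<Sum>d=1..Suc n. if d dvd Suc n then f d else 0)"
    using Suc by simp
  also have "\<dots> = (\<Sum>d=1..Suc n. f d * real (Suc n div d))"
    by (subst sum.distrib[symmetric], rule sum.cong) (auto simp: div_Suc dvd_eq_mod_eq_0 algebra_simps)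
  finally show ?case .
qed

lemma ln_fact_eq_sum_ln: "ln (fact n) = (\<Sum>m=1..n. ln (real m))"
proof -
  have "ln (fact n :: real) = ln (\<Prod>m=1..n. real m)" by (simp add: fact_prod)
  also have "\<dots> = (\<Sum>m=1..n. ln (real m))" by (subst ln_prod) auto
  finally show ?thesis .
qed

lemma ln_fact_eq_sum_mangoldt: "ln (fact n) = (\<Sum>d=1..n. mangoldt d * real (n div d))"
proof -
  have "ln (fact n :: real) = (\<Sum>m=1..n. ln (real m))" by (rule ln_fact_eq_sum_ln)
  also have "\<dots> = (\<Sum>m=1..n. \<Sum>d | d dvd m. mangoldt d)"
    by (rule sum.cong) (auto simp: mangoldt_sum)
  finally show ?thesis using sum_divisor_sums[of mangoldt n] by simp
qed

lemma ln_fact_le: "ln (fact n) \<le> real n * ln (real n)"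
proof -
  have "ln (fact n :: real) = (\<Sum>m=1..n. ln (real m))" by (rule ln_fact_eq_sum_ln)
  also have "\<dots> \<le> (\<Sum>m=1..n. ln (real n))"
    by (rule sum_mono) auto
  finally show ?thesis by simp
qed

lemma ln_fact_ge: "real n * ln (real n) - real n \<le> ln (fact n)"
proof (induction n)
  case (Suc n)
  show ?case
  proof (cases "n = 0")
    case False
    then have "ln (real (Suc n)) - ln (real n) = ln (1 + 1 / real n)"
      by (simp add: ln_div field_simps)
    also have "\<dots> \<le> 1 / real n"
      by (intro ln_add_one_self_le_self) simp
    finally have "real n * (ln (real (Suc n)) - ln (real n)) \<le> 1"
      using False by (simp add: field_simps)
    moreover have "ln (fact (Suc n)) = ln (fact n) + ln (real (Suc n))"
      by (simp only: ln_fact_eq_sum_ln) simp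
    ultimately show ?thesis using Suc by (simp add: algebra_simps)
  qed simp
qed simp

lemma ln_central_binomial_le: "ln (fact (2*n)) - 2 * ln (fact n) \<le> 2 * real n * ln 2"
proof -
  have "fact n * fact n * ((2*n) choose n) = (fact (2*n) :: nat)"
    using binomial_fact_lemma[of n "2*n"] by (simp add: mult_2)
  then have "fact (2*n) = real ((2*n) choose n) * fact n * fact n"
    by (metis (mono_tags) mult.commute mult.left_commute of_nat_fact of_nat_mult)
  then have "ln (fact (2*n)) - 2 * ln (fact n) = ln (real ((2*n) choose n))"
    by (simp add: ln_mult binomial_eq_0_iff)
  also have "\<dots> \<le> ln (2 ^ (2*n))"
    using binomial_le_pow2[of "2*n" n] by (simp add: binomial_eq_0_iff flip: of_nat_le_iff)
  finally show ?thesis by (simp add: ln_realpow)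
qed

definition chebyshev_psi :: "nat \<Rightarrow> real" where
  "chebyshev_psi n = (\<Sum>d=1..n. mangoldt d)"

lemma chebyshev_psi_mono: "m \<le> n \<Longrightarrow> chebyshev_psi m \<le> chebyshev_psi n"
  unfolding chebyshev_psi_def by (rule sum_mono2) (auto simp: mangoldt_nonneg)

text \<open>Every prime power in \<open>(n, 2n]\<close> is counted once in \<open>ln (2n)! - 2 ln n!\<close>, and the
  remaining terms of Legendre's formula are nonnegative.\<close>
lemma chebyshev_psi_double_le: "chebyshev_psi (2*n) - chebyshev_psi n \<le> 2 * real n * ln 2"
proof -
  let ?w = "\<lambda>d. mangoldt d * (real ((2*n) div d) - 2 * real (n div d))"
  have "chebyshev_psi (2*n) - chebyshev_psi n = (\<Sum>d\<in>{n<..2*n}. mangoldt d)"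
  proof -
    have "{1..2*n} = {1..n} \<union> {n<..2*n}" by auto
    then have "chebyshev_psi (2*n) = chebyshev_psi n + (\<Sum>d\<in>{n<..2*n}. mangoldt d)"
      unfolding chebyshev_psi_def by (subst sum.union_disjoint[symmetric]) auto
    then show ?thesis by simp
  qed
  also have "\<dots> = (\<Sum>d\<in>{n<..2*n}. ?w d)"
  proof (rule sum.cong)
    fix d assume d: "d \<in> {n<..2*n}"
    then have "(2*n) div d < 2" "(2*n) div d > 0"
      by (auto simp: div_less_iff_less_mult div_greater_zero_iff)
    then have "(2*n) div d = 1" by simp
    then show "mangoldt d = ?w d" using d by simp
  qed simp
  also have "\<dots> \<le> (\<Sum>d=1..2*n. ?w d)"
  proof (rule sum_mono2)
    fix d assume "d \<in> {1..2*n} - {n<..2*n}"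
    then have "d > 0" by simp
    have "2 * (n div d) * d \<le> 2 * n" using div_times_less_eq_dividend[of n d] by simp
    then have "2 * (n div d) \<le> (2*n) div d"
      using div_le_mono[of "2 * (n div d) * d" "2 * n" d] \<open>d > 0\<close> by simp
    then show "0 \<le> ?w d"
      by (intro mult_nonneg_nonneg mangoldt_nonneg) (simp flip: of_nat_le_iff)
  qed auto
  also have "\<dots> = ln (fact (2*n)) - 2 * ln (fact n)"
  proof -
    have "ln (fact n) = (\<Sum>d=1..2*n. mangoldt d * real (n div d))"
      unfolding ln_fact_eq_sum_mangoldt by (rule sum.mono_neutral_left) auto
    then show ?thesis
      by (simp add: ln_fact_eq_sum_mangoldt sum_subtractf sum_distrib_left algebra_simps)
  qed
  also have "\<dots> \<le> 2 * real n * ln 2" by (rule ln_central_binomial_le)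
  finally show ?thesis .
qed

lemma chebyshev_psi_le: "chebyshev_psi n \<le> 4 * ln 2 * real n"
proof (induction n rule: less_induct)
  case (less n)
  show ?case
  proof (cases "n \<le> 1")
    case True
    then show ?thesis by (auto simp: chebyshev_psi_def le_Suc_eq)
  next
    case False
    define k where "k = (n + 1) div 2"
    have "k < n" "n \<le> 2*k" "3*k \<le> 2*n" using False unfolding k_def by auto
    have "chebyshev_psi n \<le> chebyshev_psi (2*k)" using \<open>n \<le> 2*k\<close> by (rule chebyshev_psi_mono)
    also have "\<dots> \<le> chebyshev_psi k + 2 * real k * ln 2" using chebyshev_psi_double_le[of k] by simp
    also have "\<dots> \<le> 6 * ln 2 * real k" using less.IH[OF \<open>k < n\<close>] by (simp add: algebra_simps)
    also have "\<dots> \<le> 4 * ln 2 * real n"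
      using mult_left_mono[of "real (3*k)" "real (2*n)" "2 * ln 2"] \<open>3*k \<le> 2*n\<close> by simp
    finally show ?thesis .
  qed
qed

definition mertens_sum :: "nat \<Rightarrow> real" where
  "mertens_sum n = (\<Sum>d=1..n. mangoldt d / real d)"

lemma ln_fact_le_mertens_sum: "ln (fact n) \<le> real n * mertens_sum n"
  unfolding ln_fact_eq_sum_mangoldt mertens_sum_def sum_distrib_left
proof (rule sum_mono)
  fix d assume "d \<in> {1..n}"
  then have "mangoldt d * real (n div d) \<le> mangoldt d * (real n / real d)"
    by (intro mult_left_mono real_div_nat_bounds mangoldt_nonneg) auto
  then show "mangoldt d * real (n div d) \<le> real n * (mangoldt d / real d)"
    by (simp add: mult.commute)
qed

lemma mertens_sum_le_ln_fact: "real n * mertens_sum n - chebyshev_psi n \<le> ln (fact n)"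
  unfolding ln_fact_eq_sum_mangoldt mertens_sum_def chebyshev_psi_def sum_distrib_left
    sum_subtractf[symmetric]
proof (rule sum_mono)
  fix d assume "d \<in> {1..n}"
  then have "mangoldt d * (real n / real d - 1) \<le> mangoldt d * real (n div d)"
    by (intro mult_left_mono real_div_nat_bounds mangoldt_nonneg) auto
  then show "real n * (mangoldt d / real d) - mangoldt d \<le> mangoldt d * real (n div d)"
    by (simp add: algebra_simps)
qed

theorem mertens_first: "\<bar>mertens_sum n - ln (real n)\<bar> \<le> 4"
proof (cases "n = 0")
  case False
  then have n: "real n > 0" by simp
  have "real n * (ln (real n) - 1) \<le> real n * mertens_sum n"
    using ln_fact_le_mertens_sum[of n] ln_fact_ge[of n] by (simp add: algebra_simps)
  then have lower: "ln (real n) - 1 \<le> mertens_sum n" using n by simp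
  have "real n * mertens_sum n \<le> real n * (ln (real n) + 4 * ln 2)"
    using mertens_sum_le_ln_fact[of n] ln_fact_le[of n] chebyshev_psi_le[of n]
    by (simp add: algebra_simps)
  then have upper: "mertens_sum n \<le> ln (real n) + 4 * ln 2" using n by simp
  show ?thesis using lower upper ln_2_less_1 by linarith
qed (simp add: mertens_sum_def)


section \<open>Mertens' second theorem\<close>

lemma summation_by_parts:
  fixes a f :: "nat \<Rightarrow> 'a::comm_ring"
  shows "(\<Sum>d\<le>N. a d * f d) = (\<Sum>d\<le>N. a d) * f N + (\<Sum>d<N. (\<Sum>i\<le>d. a i) * (f d - f (Suc d)))"
  by (induction N) (simp_all add: algebra_simps)

lemma mertens_sum_eq_sum_atMost: "mertens_sum n = (\<Sum>d\<le>n. mangoldt d / real d)"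
  unfolding mertens_sum_def by (rule sum.mono_neutral_left) (auto simp: Suc_le_eq)

definition inv_ln :: "nat \<Rightarrow> real" where
  "inv_ln n = 1 / ln (real n)"

lemma inv_ln_LIMSEQ: "inv_ln \<longlonglongrightarrow> 0"
  unfolding inv_ln_def by real_asymp

lemma inv_ln_Suc_le: "2 \<le> d \<Longrightarrow> inv_ln (Suc d) \<le> inv_ln d"
  unfolding inv_ln_def by (simp add: frac_le)

definition mangoldt_ln_sum :: "nat \<Rightarrow> real" where
  "mangoldt_ln_sum N = (\<Sum>d\<le>N. mangoldt d / (real d * ln (real d)))"

definition mertens_remainder :: "nat \<Rightarrow> real" where
  "mertens_remainder n = mertens_sum n - ln (real n)"

text \<open>The error made in one step when \<open>\<Sum> (ln d) (1/ln d - 1/ln (d+1))\<close> is compared with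
  the telescoping sum of \<open>ln ln d\<close>.\<close>
definition ln_ln_step_error :: "nat \<Rightarrow> real" where
  "ln_ln_step_error d = ln (real d) * (inv_ln d - inv_ln (Suc d))
     - (if 2 \<le> d then ln (ln (real (Suc d))) - ln (ln (real d)) else 0)"

lemma telescope_from_2:
  fixes g :: "nat \<Rightarrow> real"
  assumes "N \<ge> 2"
  shows "(\<Sum>d<N. if 2 \<le> d then g (Suc d) - g d else 0) = g N - g 2"
  using assms by (induction N rule: dec_induct) (simp_all add: lessThan_nat_numeral)

lemma mangoldt_ln_sum_decomp:
  assumes "N \<ge> 2"
  shows "mangoldt_ln_sum N - ln (ln (real N)) = 1 + mertens_remainder N * inv_ln N
           + (\<Sum>d<N. ln_ln_step_error d) - ln (ln 2)
           + (\<Sum>d<N. mertens_remainder d * (inv_ln d - inv_ln (Suc d)))"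
proof -
  have abel: "mangoldt_ln_sum N
      = mertens_sum N * inv_ln N + (\<Sum>d<N. mertens_sum d * (inv_ln d - inv_ln (Suc d)))"
    using summation_by_parts[of "\<lambda>d. mangoldt d / real d" inv_ln N]
    by (simp add: mangoldt_ln_sum_def mertens_sum_eq_sum_atMost inv_ln_def)
  have "mertens_sum N * inv_ln N = 1 + mertens_remainder N * inv_ln N"
    using assms unfolding mertens_remainder_def inv_ln_def by (simp add: field_simps)
  moreover have "(\<Sum>d<N. ln (real d) * (inv_ln d - inv_ln (Suc d)))
      = (\<Sum>d<N. ln_ln_step_error d) + (ln (ln (real N)) - ln (ln 2))"
    using telescope_from_2[OF assms, of "\<lambda>d. ln (ln (real d))"]
    by (simp add: ln_ln_step_error_def sum_subtractf)
  moreover have "(\<Sum>d<N. mertens_sum d * (inv_ln d - inv_ln (Suc d)))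
      = (\<Sum>d<N. ln (real d) * (inv_ln d - inv_ln (Suc d)))
        + (\<Sum>d<N. mertens_remainder d * (inv_ln d - inv_ln (Suc d)))"
    unfolding mertens_remainder_def by (simp add: sum.distrib[symmetric] algebra_simps)
  ultimately show ?thesis unfolding abel by simp
qed

lemma ln_ge_1_minus_inverse: "(x::real) > 0 \<Longrightarrow> 1 - 1 / x \<le> ln x"
  using ln_le_minus_one[of "1/x"] by (simp add: ln_div)

text \<open>With \<open>a = ln d\<close>, \<open>b = ln (d+1)\<close> the error is \<open>1 - a/b + ln (a/b)\<close>, which lies between
  \<open>-(b-a)\<^sup>2/(a b)\<close> and 0.\<close>
lemma ln_ln_step_error_bound:
  assumes d: "d \<ge> 2"
  shows "\<bar>ln_ln_step_error d\<bar> \<le> (1 / (ln 2)^2) * inverse (real d ^ 2)"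
proof -
  define a where "a = ln (real d)"
  define b where "b = ln (real (Suc d))"
  have a2: "a \<ge> ln 2" unfolding a_def using d by simp
  have ab: "a < b" unfolding a_def b_def using d by simp
  have apos: "a > 0" using a2 ln_gt_zero[of 2] by linarith
  have err: "ln_ln_step_error d = 1 - a / b + ln (a / b)"
    using d apos ab unfolding ln_ln_step_error_def a_def[symmetric] b_def[symmetric] inv_ln_def
    by (simp add: ln_div field_simps)
  have upper: "ln_ln_step_error d \<le> 0"
    using err ln_le_minus_one[of "a/b"] apos ab by simp
  have "2 - a / b - b / a = - ((b - a)^2 / (a * b))"
    using apos ab by (simp add: field_simps power2_eq_square)
  then have lower: "- ((b - a)^2 / (a * b)) \<le> ln_ln_step_error d"
    using err ln_ge_1_minus_inverse[of "a/b"] apos ab by simp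
  have "b - a = ln (real (Suc d) / real d)" unfolding a_def b_def using d by (simp add: ln_div)
  also have "\<dots> \<le> 1 / real d"
    using d ln_le_minus_one[of "real (Suc d) / real d"] by (simp add: field_simps)
  finally have "(b - a)^2 \<le> (1 / real d)^2" using ab by (intro power_mono) auto
  moreover have "(ln 2)^2 \<le> a * b"
    using mult_mono[of "ln 2" a "ln 2" b] a2 ab by (simp add: power2_eq_square)
  ultimately have "(b - a)^2 / (a * b) \<le> (1 / real d)^2 / (ln 2)^2"
    by (intro frac_le) auto
  then show ?thesis using upper lower by (simp add: field_simps)
qed

lemma summable_ln_ln_step_error: "summable ln_ln_step_error"
proof (rule summable_comparison_test')
  show "summable (\<lambda>d. (1 / (ln 2)^2) * inverse (real d ^ 2))"
    by (intro summable_mult inverse_power_summable) simp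
  show "norm (ln_ln_step_error n) \<le> (1 / (ln 2)^2) * inverse (real n ^ 2)" if "n \<ge> 2" for n
    using ln_ln_step_error_bound[OF that] by simp
qed

lemma summable_mertens_remainder_inv_ln:
  "summable (\<lambda>d. mertens_remainder d * (inv_ln d - inv_ln (Suc d)))"
proof (rule summable_comparison_test')
  show "summable (\<lambda>d. 4 * (inv_ln d - inv_ln (Suc d)))"
    by (intro summable_mult telescope_summable'[OF inv_ln_LIMSEQ])
  fix n :: nat assume n: "n \<ge> 2"
  have "\<bar>mertens_remainder n\<bar> * (inv_ln n - inv_ln (Suc n)) \<le> 4 * (inv_ln n - inv_ln (Suc n))"
    using mertens_first[of n] inv_ln_Suc_le[OF n] unfolding mertens_remainder_def
    by (intro mult_right_mono) auto
  then show "norm (mertens_remainder n * (inv_ln n - inv_ln (Suc n)))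
      \<le> 4 * (inv_ln n - inv_ln (Suc n))"
    using inv_ln_Suc_le[OF n] by (simp add: abs_mult)
qed

lemma mertens_remainder_inv_ln_LIMSEQ: "(\<lambda>N. mertens_remainder N * inv_ln N) \<longlonglongrightarrow> 0"
proof (rule Lim_null_comparison)
  show "eventually (\<lambda>N. norm (mertens_remainder N * inv_ln N) \<le> 4 * inv_ln N) sequentially"
    using eventually_ge_at_top[of "1::nat"]
  proof eventually_elim
    case (elim N)
    then have "inv_ln N \<ge> 0" by (simp add: inv_ln_def)
    then show ?case
      using mertens_first[of N] unfolding mertens_remainder_def
      by (simp add: abs_mult mult_right_mono)
  qed
  show "(\<lambda>N. 4 * inv_ln N) \<longlonglongrightarrow> 0"
    using tendsto_mult_right_zero[OF inv_ln_LIMSEQ, of 4] by simp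
qed

lemma convergent_mangoldt_ln_sum: "convergent (\<lambda>N. mangoldt_ln_sum N - ln (ln (real N)))"
proof -
  let ?r = "\<lambda>d. mertens_remainder d * (inv_ln d - inv_ln (Suc d))"
  have "(\<lambda>N. 1 + mertens_remainder N * inv_ln N + (\<Sum>d<N. ln_ln_step_error d) - ln (ln 2)
            + (\<Sum>d<N. ?r d))
        \<longlonglongrightarrow> 1 + 0 + suminf ln_ln_step_error - ln (ln 2) + suminf ?r"
    by (intro tendsto_intros mertens_remainder_inv_ln_LIMSEQ summable_LIMSEQ
        summable_ln_ln_step_error summable_mertens_remainder_inv_ln)
  then have "(\<lambda>N. mangoldt_ln_sum N - ln (ln (real N)))
      \<longlonglongrightarrow> 1 + 0 + suminf ln_ln_step_error - ln (ln 2) + suminf ?r"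
    by (rule Lim_transform_eventually)
      (use eventually_ge_at_top[of "2::nat"] in \<open>eventually_elim, simp add: mangoldt_ln_sum_decomp\<close>)
  then show ?thesis by (rule convergentI)
qed

definition prime_recip :: "nat \<Rightarrow> real" where
  "prime_recip d = (if prime d then 1 / real d else 0)"

definition prime_power_excess :: "nat \<Rightarrow> real" where
  "prime_power_excess d = mangoldt d / (real d * ln (real d)) - prime_recip d"

lemma prime_power_excess_bounds:
  "0 \<le> prime_power_excess d"
  "prime_power_excess d \<le> (if primepow d \<and> \<not> prime d then 1 / real d else 0)"
proof -
  consider "prime d" | "primepow d" "\<not> prime d" | "\<not> primepow d" by blast
  then have "0 \<le> prime_power_excess d \<and>
      prime_power_excess d \<le> (if primepow d \<and> \<not> prime d then 1 / real d else 0)"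
  proof cases
    case 1
    then have "ln (real d) > 0" using prime_gt_1_nat[OF 1] by simp
    then show ?thesis using 1 by (simp add: prime_power_excess_def prime_recip_def)
  next
    case 2
    then have "d > 1" using primepow_gt_Suc_0 by fastforce
    then have "ln (real d) > 0" by simp
    moreover have "mangoldt d \<le> ln (real d)" using \<open>d > 1\<close> by (intro mangoldt_le) simp
    ultimately have "mangoldt d / (real d * ln (real d)) \<le> 1 / real d"
      using \<open>d > 1\<close> by (simp add: field_simps)
    then show ?thesis
      using 2 \<open>ln (real d) > 0\<close> \<open>d > 1\<close>
      by (simp add: prime_power_excess_def prime_recip_def mangoldt_nonneg)
  next
    case 3
    then have "\<not> prime d" using primepow_prime by blast
    then show ?thesis using 3 by (simp add: prime_power_excess_def prime_recip_def mangoldt_def)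
  qed
  then show "0 \<le> prime_power_excess d"
    "prime_power_excess d \<le> (if primepow d \<and> \<not> prime d then 1 / real d else 0)" by auto
qed

lemma geometric_sum_from_2_le:
  fixes x :: real
  assumes "0 \<le> x" "x < 1"
  shows "(\<Sum>k=2..N. x^k) \<le> x^2 / (1 - x)"
proof (cases "2 \<le> N")
  case True
  then have "(1 - x) * (\<Sum>k=2..N. x^k) \<le> x^2"
    using sum_gp_multiplied[OF True, of x] assms by simp
  then show ?thesis using assms by (simp add: pos_le_divide_eq mult.commute)
qed (use assms in simp)

lemma sum_inverse_consecutive_le: "(\<Sum>m=2..N. 1 / (real m * (real m - 1))) \<le> 1"
proof (cases "N \<ge> 1")
  case True
  have "(\<Sum>m=2..N. 1 / (real m * (real m - 1)))
      = (\<Sum>m=Suc 1..N. (\<lambda>k. - 1 / real k) m - (\<lambda>k. - 1 / real k) (m - 1))"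
    by (rule sum.cong) (auto simp: field_simps of_nat_diff)
  also have "\<dots> = 1 - 1 / real N" using sum_telescope''[OF True, of "\<lambda>k. - 1 / real k"] by simp
  finally show ?thesis by simp
qed simp

lemma proper_prime_powers_subset:
  "{d\<in>{..<N}. primepow d \<and> \<not> prime d} \<subseteq> (\<lambda>(m,k). m^k) ` ({2..N} \<times> {2..N})"
proof
  fix d assume "d \<in> {d\<in>{..<N}. primepow d \<and> \<not> prime d}"
  then obtain p k where d: "d < N" "\<not> prime d" "prime p" "k > 0" "d = p ^ k"
    unfolding primepow_def by auto
  then have "k \<noteq> 1" by auto
  then have "k \<ge> 2" "p \<ge> 2" using d by (auto simp: prime_ge_2_nat)
  have "p \<le> p ^ k" using \<open>p \<ge> 2\<close> \<open>k > 0\<close> by (simp add: self_le_power)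
  then have "p \<le> N" using d(1) d(5) by linarith
  have "k < 2 ^ k" by (rule less_exp)
  also have "2 ^ k \<le> p ^ k" using \<open>p \<ge> 2\<close> by (simp add: power_mono)
  finally have "k \<le> N" using d by simp
  then show "d \<in> (\<lambda>(m,k). m^k) ` ({2..N} \<times> {2..N})"
    using d \<open>k \<ge> 2\<close> \<open>p \<ge> 2\<close> \<open>p \<le> N\<close> by (intro image_eqI[of _ _ "(p,k)"]) auto
qed

lemma sum_proper_prime_power_inverse_le:
  "(\<Sum>d<N. if primepow d \<and> \<not> prime d then 1 / real d else 0) \<le> 1"
proof -
  define I where "I = {2..N} \<times> {2..N}"
  have "(\<Sum>d<N. if primepow d \<and> \<not> prime d then 1 / real d else 0)
      = (\<Sum>d\<in>{d\<in>{..<N}. primepow d \<and> \<not> prime d}. 1 / real d)"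
    by (rule sum.inter_filter[symmetric]) simp
  also have "\<dots> \<le> (\<Sum>d\<in>(\<lambda>(m,k). m^k) ` I. 1 / real d)"
    unfolding I_def by (intro sum_mono2 proper_prime_powers_subset) auto
  also have "\<dots> \<le> (\<Sum>(m,k)\<in>I. 1 / real (m^k))"
    using sum_image_le[of I "\<lambda>d. 1 / real d" "\<lambda>(m,k). m^k"] unfolding I_def
    by (simp add: case_prod_unfold comp_def)
  also have "\<dots> = (\<Sum>m=2..N. \<Sum>k=2..N. (1 / real m)^k)"
    unfolding I_def by (simp add: sum.cartesian_product power_one_over)
  also have "\<dots> \<le> (\<Sum>m=2..N. 1 / (real m * (real m - 1)))"
  proof (rule sum_mono)
    fix m assume m: "m \<in> {2..N}"
    then have "(\<Sum>k=2..N. (1 / real m)^k) \<le> (1 / real m)^2 / (1 - 1 / real m)"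
      by (intro geometric_sum_from_2_le) auto
    also have "\<dots> = 1 / (real m * (real m - 1))" using m by (simp add: field_simps power2_eq_square)
    finally show "(\<Sum>k=2..N. (1 / real m)^k) \<le> 1 / (real m * (real m - 1))" .
  qed
  also have "\<dots> \<le> 1" by (rule sum_inverse_consecutive_le)
  finally show ?thesis .
qed

lemma summable_prime_power_excess: "summable prime_power_excess"
proof (rule summableI_nonneg_bounded)
  show "0 \<le> prime_power_excess n" for n by (rule prime_power_excess_bounds)
  show "(\<Sum>i<n. prime_power_excess i) \<le> 1" for n
    using sum_mono[of "{..<n}" prime_power_excess, OF prime_power_excess_bounds(2)]
      sum_proper_prime_power_inverse_le[of n] by linarith
qed

lemma convergent_prime_recip_sum: "convergent (\<lambda>N. (\<Sum>d\<le>N. prime_recip d) - ln (ln (real N)))"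
proof -
  have "(\<lambda>N. (mangoldt_ln_sum N - ln (ln (real N))) - (\<Sum>d<Suc N. prime_power_excess d))
      \<longlonglongrightarrow> lim (\<lambda>N. mangoldt_ln_sum N - ln (ln (real N))) - suminf prime_power_excess"
    using convergent_mangoldt_ln_sum
    by (intro tendsto_diff LIMSEQ_Suc[OF summable_LIMSEQ] summable_prime_power_excess)
      (simp add: convergent_LIMSEQ_iff)
  moreover have "mangoldt_ln_sum N - (\<Sum>d<Suc N. prime_power_excess d) = (\<Sum>d\<le>N. prime_recip d)"
    for N
    by (simp add: mangoldt_ln_sum_def prime_power_excess_def sum_subtractf lessThan_Suc_atMost)
  ultimately show ?thesis by (auto intro: convergentI simp: algebra_simps)
qed

lemma sum_prime_recip_eq:
  assumes "x \<ge> 0"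
  shows "(\<Sum>p\<in>{p::nat. prime p \<and> real p \<le> x}. 1 / real p) = (\<Sum>d\<le>nat \<lfloor>x\<rfloor>. prime_recip d)"
proof -
  have "real n \<le> x \<longleftrightarrow> n \<le> nat \<lfloor>x\<rfloor>" if "prime n" for n
    using assms by (simp add: le_nat_iff le_floor_iff)
  then have "{p::nat. prime p \<and> real p \<le> x} = {d\<in>{..nat \<lfloor>x\<rfloor>}. prime d}" by auto
  then show ?thesis unfolding prime_recip_def by (simp add: sum.inter_filter[symmetric])
qed

lemma ln_ln_minus_ln_ln_floor_tendsto_0:
  "((\<lambda>x::real. ln (ln x) - ln (ln (real (nat \<lfloor>x\<rfloor>)))) \<longlongrightarrow> 0) at_top"
proof (rule tendsto_sandwich[of "\<lambda>_. 0" _ _ "\<lambda>x. ln (ln x) - ln (ln (x - 1))"])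
  have floor_bounds: "eventually (\<lambda>x::real. x - 1 \<le> real (nat \<lfloor>x\<rfloor>) \<and> real (nat \<lfloor>x\<rfloor>) \<le> x \<and> x \<ge> 3) at_top"
    using eventually_ge_at_top[of "3::real"] by eventually_elim linarith
  show "eventually (\<lambda>x. 0 \<le> ln (ln x) - ln (ln (real (nat \<lfloor>x\<rfloor>)))) at_top"
    using floor_bounds by eventually_elim simp
  show "eventually (\<lambda>x. ln (ln x) - ln (ln (real (nat \<lfloor>x\<rfloor>))) \<le> ln (ln x) - ln (ln (x - 1))) at_top"
    using floor_bounds by eventually_elim simp
  show "((\<lambda>x::real. ln (ln x) - ln (ln (x - 1))) \<longlongrightarrow> 0) at_top" by real_asymp
qed simp

theorem prime_recip_sum_LIMSEQ_mertens_c1: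
  "(\<lambda>N. (\<Sum>d\<le>N. prime_recip d) - ln (ln (real N))) \<longlonglongrightarrow> mertens_c1"
proof -
  define c where "c = lim (\<lambda>N. (\<Sum>d\<le>N. prime_recip d) - ln (ln (real N)))"
  have seq: "(\<lambda>N. (\<Sum>d\<le>N. prime_recip d) - ln (ln (real N))) \<longlonglongrightarrow> c"
    using convergent_prime_recip_sum unfolding c_def by (simp add: convergent_LIMSEQ_iff)
  have floor: "filterlim (\<lambda>x::real. nat \<lfloor>x\<rfloor>) sequentially at_top"
    by (rule filterlim_compose[OF filterlim_nat_sequentially filterlim_floor_sequentially])
  have "((\<lambda>x::real. (\<Sum>d\<le>nat \<lfloor>x\<rfloor>. prime_recip d) - ln (ln x)) \<longlongrightarrow> c) at_top"
    using tendsto_diff[OF filterlim_compose[OF seq floor] ln_ln_minus_ln_ln_floor_tendsto_0]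
    by (simp add: comp_def)
  then have "((\<lambda>x::real. (\<Sum>p\<in>{p::nat. prime p \<and> real p \<le> x}. 1 / real p) - ln (ln x)) \<longlongrightarrow> c) at_top"
    by (rule Lim_transform_eventually)
      (use eventually_ge_at_top[of "0::real"] in \<open>eventually_elim, simp add: sum_prime_recip_eq\<close>)
  then have "mertens_c1 = c"
    unfolding mertens_c1_def by (rule tendsto_Lim[OF trivial_limit_at_top_linorder])
  then show ?thesis using seq by simp
qed

section \<open>An upper bound for the Meissel--Mertens constant\<close>

lemma powr_neg_diff_ge:
  fixes x \<delta> :: real
  assumes x: "x > 1" and \<delta>: "\<delta> > 0"
  shows "\<delta> * x powr (-(1+\<delta>)) \<le> (x - 1) powr (-\<delta>) - x powr (-\<delta>)"
proof -
  have "ln (x - 1) - ln x = ln ((x - 1) / x)" using x by (simp add: ln_div)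
  also have "\<dots> \<le> (x - 1) / x - 1" using x by (intro ln_le_minus_one) simp
  also have "\<dots> = - 1 / x" using x by (simp add: field_simps)
  finally have "-\<delta> * ln x + \<delta> / x \<le> -\<delta> * ln (x - 1)"
    using \<delta> mult_left_mono[of "ln (x - 1)" "ln x - 1 / x" \<delta>] by (simp add: algebra_simps)
  then have "x powr (-\<delta>) * exp (\<delta> / x) \<le> (x - 1) powr (-\<delta>)"
    using x by (simp add: powr_def flip: exp_add)
  moreover have "x powr (-\<delta>) * (1 + \<delta> / x) \<le> x powr (-\<delta>) * exp (\<delta> / x)"
    by (intro mult_left_mono exp_ge_add_one_self) simp
  moreover have "x powr (-(1+\<delta>)) = x powr (-\<delta>) / x"
    using x by (simp add: powr_diff powr_minus_divide diff_conv_add_uminus[symmetric])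
  ultimately show ?thesis by (simp add: algebra_simps)
qed

lemma sum_powr_neg_le:
  fixes \<delta> :: real
  assumes \<delta>: "\<delta> > 0"
  shows "(\<Sum>n=1..M. real n powr (-(1+\<delta>))) \<le> 1 + 1 / \<delta>"
proof (cases "M \<ge> 1")
  case True
  define F where "F = (\<lambda>k::nat. - (real k powr (-\<delta>)))"
  have "(\<Sum>n=2..M. real n powr (-(1+\<delta>))) \<le> (\<Sum>n=2..M. (F n - F (n - 1)) / \<delta>)"
  proof (rule sum_mono)
    fix n assume "n \<in> {2..M}"
    then have "real n > 1" "real (n - 1) = real n - 1" by (auto simp: of_nat_diff)
    then show "real n powr (-(1+\<delta>)) \<le> (F n - F (n - 1)) / \<delta>"
      using powr_neg_diff_ge[of "real n" \<delta>] \<delta> by (simp add: F_def pos_le_divide_eq mult.commute)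
  qed
  also have "\<dots> = (\<Sum>n=Suc 1..M. F n - F (n - 1)) / \<delta>"
    by (simp add: sum_divide_distrib numeral_2_eq_2)
  also have "\<dots> = (1 - real M powr (-\<delta>)) / \<delta>"
    using sum_telescope''[OF True, of F] by (simp add: F_def)
  also have "\<dots> \<le> 1 / \<delta>" using \<delta> by (simp add: divide_right_mono)
  moreover have "{1..M} = insert 1 {2..M}" using True by auto
  ultimately show ?thesis by simp
qed (use \<delta> in simp)

lemma inj_on_prod_prime_powers:
  fixes Q :: "nat set"
  assumes "finite Q" "\<And>p. p \<in> Q \<Longrightarrow> prime p"
  shows "inj_on (\<lambda>g. \<Prod>p\<in>Q. p ^ g p) (PiE Q A)"
proof (rule inj_onI, rule PiE_ext)
  fix g h q assume eq: "(\<Prod>p\<in>Q. p ^ g p) = (\<Prod>p\<in>Q. p ^ h p)" and "q \<in> Q"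
  have "multiplicity q (\<Prod>p\<in>Q. p ^ f p) = f q" for f :: "nat \<Rightarrow> nat"
    using multiplicity_prod_prime_powers[OF assms assms(2)[OF \<open>q \<in> Q\<close>], of f] \<open>q \<in> Q\<close> by simp
  then show "g q = h q" using eq by metis
qed

text \<open>The truncated Euler product expands into a sum over distinct integers in \<open>[1, \<Prod> p\<^sup>K]\<close>.\<close>
lemma truncated_euler_product_le:
  fixes \<delta> :: real and Q :: "nat set"
  assumes \<delta>: "\<delta> > 0" and Q: "finite Q" "\<And>p. p \<in> Q \<Longrightarrow> prime p"
  shows "(\<Prod>p\<in>Q. \<Sum>k\<le>K. (real p powr (-(1+\<delta>)))^k) \<le> 1 + 1 / \<delta>"
proof -
  define s where "s = 1 + \<delta>"
  define \<phi> where "\<phi> = (\<lambda>g. \<Prod>p\<in>Q. p ^ g p)"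
  define P where "P = PiE Q (\<lambda>_. {..K})"
  have pos: "p > 0" if "p \<in> Q" for p using Q(2)[OF that] prime_gt_0_nat by blast
  have inj: "inj_on \<phi> P"
    unfolding \<phi>_def P_def by (rule inj_on_prod_prime_powers[OF Q])
  have "(\<Prod>p\<in>Q. \<Sum>k\<le>K. (real p powr (-s))^k) = (\<Sum>g\<in>P. \<Prod>p\<in>Q. (real p powr (-s))^(g p))"
    unfolding P_def by (rule prod_sum_PiE) (auto simp: Q)
  also have "\<dots> = (\<Sum>g\<in>P. real (\<phi> g) powr (-s))"
  proof (rule sum.cong)
    fix g
    have "(real p powr (-s))^(g p) = real (p ^ g p) powr (-s)" if "p \<in> Q" for p
      using pos[OF that] by (simp add: powr_power powr_realpow[symmetric] powr_powr mult.commute)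
    then show "(\<Prod>p\<in>Q. (real p powr (-s))^(g p)) = real (\<phi> g) powr (-s)"
      unfolding \<phi>_def by (simp add: prod_powr_distrib)
  qed simp
  also have "\<dots> = (\<Sum>n\<in>\<phi> ` P. real n powr (-s))"
    using sum.reindex[OF inj, of "\<lambda>n. real n powr (-s)"] by (simp add: comp_def)
  also have "\<dots> \<le> (\<Sum>n=1..(\<Prod>p\<in>Q. p ^ K). real n powr (-s))"
  proof (rule sum_mono2)
    show "\<phi> ` P \<subseteq> {1..(\<Prod>p\<in>Q. p ^ K)}"
    proof clarify
      fix g assume g: "g \<in> P"
      have "1 \<le> \<phi> g" unfolding \<phi>_def using pos by (intro prod_ge_1) (simp add: Suc_leI)
      moreover have "\<phi> g \<le> (\<Prod>p\<in>Q. p ^ K)"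
        unfolding \<phi>_def
      proof (intro prod_mono conjI)
        fix p assume p: "p \<in> Q"
        then have "g p \<le> K" using g by (auto simp: P_def)
        then show "p ^ g p \<le> p ^ K" using pos[OF p] by (simp add: power_increasing)
      qed simp
      ultimately show "\<phi> g \<in> {1..(\<Prod>p\<in>Q. p ^ K)}" by simp
    qed
  qed auto
  also have "\<dots> \<le> 1 + 1 / \<delta>" unfolding s_def by (rule sum_powr_neg_le[OF \<delta>])
  finally show ?thesis unfolding s_def .
qed

lemma sum_neg_ln_one_minus_prime_powr_le:
  fixes \<delta> :: real and Q :: "nat set"
  assumes \<delta>: "\<delta> > 0" and Q: "finite Q" "\<And>p. p \<in> Q \<Longrightarrow> prime p"
  shows "(\<Sum>p\<in>Q. - ln (1 - real p powr (-(1+\<delta>)))) \<le> ln (1 + 1 / \<delta>)"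
proof -
  define x where "x = (\<lambda>p::nat. real p powr (-(1+\<delta>)))"
  have x01: "0 < x p \<and> x p < 1" if "p \<in> Q" for p
    using prime_gt_1_nat[OF Q(2)[OF that]] \<delta> unfolding x_def by (simp add: powr_less_one)
  have "(\<lambda>K. \<Prod>p\<in>Q. \<Sum>k\<le>K. (x p)^k) \<longlonglongrightarrow> (\<Prod>p\<in>Q. 1 / (1 - x p))"
  proof (intro tendsto_prod)
    fix p assume "p \<in> Q"
    then have "(\<lambda>k. (x p)^k) sums (1 / (1 - x p))"
      using x01[of p] by (intro geometric_sums) auto
    then show "(\<lambda>K. \<Sum>k\<le>K. (x p)^k) \<longlonglongrightarrow> 1 / (1 - x p)"
      using LIMSEQ_Suc by (fastforce simp: sums_def lessThan_Suc_atMost)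
  qed
  then have le: "(\<Prod>p\<in>Q. 1 / (1 - x p)) \<le> 1 + 1 / \<delta>"
    by (rule LIMSEQ_le_const2) (use truncated_euler_product_le[OF \<delta> Q] x_def in auto)
  have "(\<Sum>p\<in>Q. - ln (1 - x p)) = (\<Sum>p\<in>Q. ln (1 / (1 - x p)))"
    using x01 by (intro sum.cong) (auto simp: ln_div)
  also have "\<dots> = ln (\<Prod>p\<in>Q. 1 / (1 - x p))"
    using x01 Q(1) by (subst ln_prod) force+
  also have "\<dots> \<le> ln (1 + 1 / \<delta>)"
    using le x01 \<delta> by (subst ln_le_cancel_iff) (auto intro!: prod_pos add_pos_pos)
  finally show ?thesis unfolding x_def .
qed

definition prime_log_excess :: "nat \<Rightarrow> real \<Rightarrow> real" where
  "prime_log_excess p s = - ln (1 - real p powr (-s)) - real p powr (-s)"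

lemma prime_log_excess_nonneg:
  assumes "prime p" "s > 0"
  shows "prime_log_excess p s \<ge> 0"
proof -
  have "0 < real p powr (-s)" "real p powr (-s) < 1"
    using assms prime_gt_1_nat[of p] by (auto simp: powr_less_one)
  then show ?thesis
    using ln_le_minus_one[of "1 - real p powr (-s)"] unfolding prime_log_excess_def by simp
qed

lemma prime_log_excess_tendsto:
  assumes "prime p"
  shows "((\<lambda>\<delta>. prime_log_excess p (1 + \<delta>)) \<longlongrightarrow> prime_log_excess p 1) (at_right 0)"
proof -
  have p: "real p \<ge> 2" using prime_ge_2_nat[OF assms] by simp
  then have "real p powr (-(1+0)) < 1" by (simp add: powr_neg_one)
  then have "((\<lambda>\<delta>::real. - ln (1 - real p powr (-(1+\<delta>))) - real p powr (-(1+\<delta>))) \<longlongrightarrow>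
          - ln (1 - real p powr (-(1+0))) - real p powr (-(1+0))) (at_right 0)"
    using p by (intro tendsto_intros) auto
  then show ?thesis unfolding prime_log_excess_def by simp
qed

text \<open>Over the primes \<open>p \<le> N\<close>, \<open>\<Sum> (p\<^sup>-\<^sup>s + prime_log_excess p s) = \<Sum> -ln (1 - p\<^sup>-\<^sup>s) \<le> ln \<zeta>(s)\<close>, and
  \<open>\<zeta>(1+\<delta>) \<le> 1 + 1/\<delta>\<close>; the nonnegative excess terms outside \<open>S\<close> are dropped.\<close>
lemma sum_prime_recip_powr_le:
  assumes \<delta>: "\<delta> > 0" and S: "finite S" "\<And>p. p \<in> S \<Longrightarrow> prime p" "S \<subseteq> {..N}"
  shows "(\<Sum>d\<le>N. prime_recip d * real d powr (-\<delta>))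
    \<le> ln (1 + 1/\<delta>) - (\<Sum>p\<in>S. prime_log_excess p (1+\<delta>))"
proof -
  define Q where "Q = {p\<in>{..N}. prime p}"
  have Q: "finite Q" "\<And>p. p \<in> Q \<Longrightarrow> prime p" unfolding Q_def by auto
  have terms: "prime_recip d * real d powr (-\<delta>) = (if prime d then real d powr (-(1+\<delta>)) else 0)" for d
    using prime_gt_0_nat[of d]
    by (simp add: prime_recip_def powr_add[of _ "-1" "-\<delta>", simplified] powr_neg_one)
  have "(\<Sum>d\<le>N. prime_recip d * real d powr (-\<delta>)) = (\<Sum>p\<in>Q. real p powr (-(1+\<delta>)))"
    unfolding terms Q_def by (rule sum.inter_filter[symmetric]) simp
  also have "\<dots> = (\<Sum>p\<in>Q. - ln (1 - real p powr (-(1+\<delta>)))) - (\<Sum>p\<in>Q. prime_log_excess p (1+\<delta>))"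
    unfolding prime_log_excess_def by (simp add: sum_subtractf)
  also have "(\<Sum>p\<in>S. prime_log_excess p (1+\<delta>)) \<le> (\<Sum>p\<in>Q. prime_log_excess p (1+\<delta>))"
    using S \<delta> by (intro sum_mono2 Q prime_log_excess_nonneg) (auto simp: Q_def)
  then have "(\<Sum>p\<in>Q. - ln (1 - real p powr (-(1+\<delta>)))) - (\<Sum>p\<in>Q. prime_log_excess p (1+\<delta>))
      \<le> ln (1 + 1/\<delta>) - (\<Sum>p\<in>S. prime_log_excess p (1+\<delta>))"
    using sum_neg_ln_one_minus_prime_powr_le[OF \<delta> Q] by simp
  finally show ?thesis .
qed

text \<open>Its partial sums are harmonic numbers \<open>H(\<lfloor>log\<^sub>2 N\<rfloor>)\<close>, so they grow like \<open>ln ln N\<close>, while its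
  Dirichlet series is the logarithmic series \<open>-ln (1 - 2\<^sup>-\<^sup>\<delta>)\<close>.\<close>
definition dyadic_recip :: "nat \<Rightarrow> real" where
  "dyadic_recip d = (if \<exists>k\<ge>1. d = 2^k then 1 / real (floor_log d) else 0)"

lemma dyadic_recip_nonneg: "dyadic_recip d \<ge> 0"
  unfolding dyadic_recip_def by simp

lemma powers_of_two_atMost:
  "{d\<in>{..N}. \<exists>k\<ge>1. d = 2^k} = (\<lambda>k. 2^k) ` {1..floor_log N}"
proof (rule subset_antisym; rule subsetI)
  fix d :: nat assume "d \<in> {d\<in>{..N}. \<exists>k\<ge>1. d = 2^k}"
  then obtain k where k: "k \<ge> 1" "d = 2^k" "d \<le> N" by auto
  then show "d \<in> (\<lambda>k. 2^k) ` {1..floor_log N}" using floor_log_le_iff[OF \<open>d \<le> N\<close>] by auto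
next
  fix d :: nat assume "d \<in> (\<lambda>k. 2^k) ` {1..floor_log N}"
  then obtain k where k: "k \<ge> 1" "k \<le> floor_log N" "d = 2^k" by auto
  then have "N > 0" by (cases "N = 0") auto
  have "(2::nat)^k \<le> 2 ^ floor_log N" using k by (intro power_increasing) auto
  also have "\<dots> \<le> N" using floor_log_exp2_le[OF \<open>N > 0\<close>] .
  finally show "d \<in> {d\<in>{..N}. \<exists>k\<ge>1. d = 2^k}" using k by auto
qed

lemma sum_dyadic_recip: "(\<Sum>d\<le>N. dyadic_recip d) = harm (floor_log N)"
proof -
  have "(\<Sum>d\<le>N. dyadic_recip d) = (\<Sum>d\<in>{d\<in>{..N}. \<exists>k\<ge>1. d = 2^k}. 1 / real (floor_log d))"
    unfolding dyadic_recip_def by (rule sum.inter_filter[symmetric]) simp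
  also have "\<dots> = (\<Sum>k=1..floor_log N. 1 / real (floor_log ((2::nat)^k)))"
    unfolding powers_of_two_atMost by (rule sum.reindex_cong[where l="\<lambda>k. 2^k"]) (auto simp: inj_on_def)
  also have "\<dots> = harm (floor_log N)" unfolding harm_def by (simp add: divide_inverse)
  finally show ?thesis .
qed

lemma filterlim_floor_log: "filterlim floor_log sequentially sequentially"
proof (subst filterlim_at_top, intro allI)
  fix Z :: nat
  show "eventually (\<lambda>N. Z \<le> floor_log N) sequentially"
    using eventually_ge_at_top[of "2^Z"] by eventually_elim (use floor_log_le_iff in fastforce)
qed

lemma floor_log_ln_bounds:
  assumes "N > 0"
  shows "real (floor_log N) * ln 2 \<le> ln (real N)" "ln (real N) \<le> real (Suc (floor_log N)) * ln 2"
proof -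
  have "2 ^ floor_log N \<le> N" "N \<le> 2 ^ Suc (floor_log N)"
    using floor_log_exp2_le[OF assms] floor_log_exp2_ge[of N] by simp_all
  then have "(2::real) ^ floor_log N \<le> real N" "real N \<le> (2::real) ^ Suc (floor_log N)"
    by (metis of_nat_le_iff of_nat_numeral of_nat_power)+
  then have "ln ((2::real) ^ floor_log N) \<le> ln (real N)"
    "ln (real N) \<le> ln ((2::real) ^ Suc (floor_log N))"
    using assms by (subst ln_le_cancel_iff; simp)+
  then show "real (floor_log N) * ln 2 \<le> ln (real N)" "ln (real N) \<le> real (Suc (floor_log N)) * ln 2"
    by (simp_all only: ln_realpow)
qed

lemma ln_ln_minus_ln_floor_log_LIMSEQ:
  "(\<lambda>N. ln (ln (real N)) - ln (real (floor_log N))) \<longlonglongrightarrow> ln (ln 2)"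
proof (rule tendsto_sandwich[of "\<lambda>_. ln (ln 2)" _ _
      "\<lambda>N. ln (ln 2) + (ln (real (Suc (floor_log N))) - ln (real (floor_log N)))"])
  have "eventually (\<lambda>N. floor_log N \<ge> 1) sequentially"
    using filterlim_floor_log by (simp add: filterlim_at_top)
  then have ev: "eventually (\<lambda>N. N > 0 \<and> floor_log N \<ge> 1 \<and> ln (real N) > 0) sequentially"
  proof (rule eventually_mono)
    fix N assume N: "floor_log N \<ge> 1"
    then have "N > 0" by (cases N) auto
    moreover have "0 < real (floor_log N) * ln 2" using N by simp
    ultimately show "N > 0 \<and> floor_log N \<ge> 1 \<and> ln (real N) > 0"
      using N floor_log_ln_bounds(1)[of N] by linarith
  qed
  show "eventually (\<lambda>N. ln (ln 2) \<le> ln (ln (real N)) - ln (real (floor_log N))) sequentially"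
    using ev
  proof eventually_elim
    case (elim N)
    then have "ln (real (floor_log N) * ln 2) \<le> ln (ln (real N))"
      using floor_log_ln_bounds(1)[of N] by (subst ln_le_cancel_iff) auto
    then show ?case using elim by (simp add: ln_mult)
  qed
  show "eventually (\<lambda>N. ln (ln (real N)) - ln (real (floor_log N))
      \<le> ln (ln 2) + (ln (real (Suc (floor_log N))) - ln (real (floor_log N)))) sequentially"
    using ev
  proof eventually_elim
    case (elim N)
    then have "ln (ln (real N)) \<le> ln (real (Suc (floor_log N)) * ln 2)"
      using floor_log_ln_bounds(2)[of N] elim by (subst ln_le_cancel_iff) auto
    then show ?case by (simp add: ln_mult)
  qed
  have "((\<lambda>k::nat. ln (real (Suc k)) - ln (real k)) \<longlongrightarrow> 0) sequentially" by real_asymp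
  from filterlim_compose[OF this filterlim_floor_log]
  show "(\<lambda>N. ln (ln 2) + (ln (real (Suc (floor_log N))) - ln (real (floor_log N)))) \<longlonglongrightarrow> ln (ln 2)"
    using tendsto_add[of "\<lambda>_. ln (ln (2::real))"] by (fastforce simp: comp_def)
qed simp

lemma dyadic_recip_sum_LIMSEQ:
  "(\<lambda>N. (\<Sum>d\<le>N. dyadic_recip d) - ln (ln (real N))) \<longlonglongrightarrow> euler_mascheroni - ln (ln 2)"
proof -
  have "(\<lambda>N. harm (floor_log N) - ln (real (floor_log N)) :: real) \<longlonglongrightarrow> euler_mascheroni"
    using filterlim_compose[OF euler_mascheroni_LIMSEQ filterlim_floor_log] by (simp add: comp_def)
  from tendsto_diff[OF this ln_ln_minus_ln_floor_log_LIMSEQ] show ?thesis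
    by (simp add: sum_dyadic_recip)
qed

subsection \<open>An Abelian theorem for the weights \<open>(m+1)\<^sup>-\<^sup>\<delta> - (m+2)\<^sup>-\<^sup>\<delta>\<close>\<close>

definition powr_weight :: "real \<Rightarrow> nat \<Rightarrow> real" where
  "powr_weight \<delta> m = real (Suc m) powr (-\<delta>) - real (Suc (Suc m)) powr (-\<delta>)"

lemma powr_weight_nonneg: "\<delta> > 0 \<Longrightarrow> powr_weight \<delta> m \<ge> 0"
  unfolding powr_weight_def by (simp add: powr_mono2')

lemma Suc_powr_neg_LIMSEQ:
  assumes "\<delta> > 0"
  shows "(\<lambda>m. real (Suc m) powr (-\<delta>)) \<longlonglongrightarrow> 0"
  using assms
  by (intro tendsto_neg_powr filterlim_compose[OF filterlim_real_sequentially filterlim_Suc]) simp_all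

lemma powr_weight_sums: "\<delta> > 0 \<Longrightarrow> powr_weight \<delta> sums 1"
  using telescope_sums'[OF Suc_powr_neg_LIMSEQ] unfolding powr_weight_def by simp

lemma sum_powr_weight: "(\<Sum>m<N. powr_weight \<delta> m) = 1 - real (Suc N) powr (-\<delta>)"
  unfolding powr_weight_def using sum_lessThan_telescope'[of "\<lambda>m. real (Suc m) powr (-\<delta>)" N] by simp

lemma summable_powr_weight_mult:
  assumes "\<delta> > 0" "\<And>m. \<bar>E m\<bar> \<le> C"
  shows "summable (\<lambda>m. E m * powr_weight \<delta> m)"
proof (rule summable_comparison_test')
  show "summable (\<lambda>m. C * powr_weight \<delta> m)"
    using powr_weight_sums[OF assms(1)] by (intro summable_mult sums_summable)
  show "norm (E m * powr_weight \<delta> m) \<le> C * powr_weight \<delta> m" for m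
    using assms powr_weight_nonneg[OF assms(1), of m] by (simp add: abs_mult mult_right_mono)
qed

lemma abs_suminf_powr_weight_le:
  assumes \<delta>: "\<delta> > 0" and bound: "\<And>m. \<bar>E m\<bar> \<le> C" and tail: "\<And>m. m \<ge> N \<Longrightarrow> \<bar>E m\<bar> \<le> \<epsilon>"
  shows "\<bar>\<Sum>m. E m * powr_weight \<delta> m\<bar> \<le> C * (1 - real (Suc N) powr (-\<delta>)) + \<epsilon>"
proof -
  let ?w = "powr_weight \<delta>"
  define h where "h = (\<lambda>m. (if m < N then C * ?w m else 0) + \<epsilon> * ?w m)"
  have "h sums ((\<Sum>m<N. C * ?w m) + \<epsilon> * 1)"
    unfolding h_def using sums_If_finite_set[of "{..<N}" "\<lambda>m. C * ?w m"]
    by (intro sums_add sums_mult powr_weight_sums \<delta>) simp_all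
  then have h: "summable h" "suminf h = C * (1 - real (Suc N) powr (-\<delta>)) + \<epsilon>"
    by (auto simp: sums_iff sum_powr_weight simp flip: sum_distrib_left)
  have \<epsilon>: "0 \<le> \<epsilon>" using tail[of N] by linarith
  have h_bound: "norm (E m * ?w m) \<le> h m" for m
  proof -
    have w: "?w m \<ge> 0" by (rule powr_weight_nonneg[OF \<delta>])
    show ?thesis
    proof (cases "m < N")
      case True
      then show ?thesis
        using mult_right_mono[OF bound[of m] w] mult_nonneg_nonneg[OF \<epsilon> w] abs_of_nonneg[OF w]
        by (simp add: h_def abs_mult)
    next
      case False
      then show ?thesis using mult_right_mono[OF tail w] w by (simp add: h_def abs_mult)
    qed
  qed
  have summable_norm_Ew: "summable (\<lambda>m. norm (E m * ?w m))"
    by (rule summable_comparison_test'[OF h(1)]) (use h_bound in simp)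
  have "\<bar>\<Sum>m. E m * ?w m\<bar> \<le> (\<Sum>m. norm (E m * ?w m))"
    using summable_norm[OF summable_norm_Ew] by simp
  also have "\<dots> \<le> suminf h"
    using h_bound by (intro suminf_le summable_norm_Ew h(1))
  finally show ?thesis unfolding h(2) .
qed

theorem abelian_powr_weight:
  fixes E :: "nat \<Rightarrow> real"
  assumes E: "E \<longlonglongrightarrow> L"
  shows "((\<lambda>\<delta>. \<Sum>m. E m * powr_weight \<delta> m) \<longlongrightarrow> L) (at_right 0)"
proof (rule tendstoI)
  fix \<epsilon> :: real assume \<epsilon>: "\<epsilon> > 0"
  obtain M where M: "\<And>m. \<bar>E m\<bar> \<le> M"
    using convergent_imp_Bseq[OF convergentI[OF E]] by (auto simp: Bseq_def)
  define C where "C = M + \<bar>L\<bar>"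
  have C: "\<bar>E m - L\<bar> \<le> C" for m using M[of m] unfolding C_def by linarith
  obtain N where N: "\<And>m. m \<ge> N \<Longrightarrow> \<bar>E m - L\<bar> < \<epsilon> / 2"
    using E \<epsilon> unfolding LIMSEQ_iff by (metis half_gt_zero real_norm_def)
  have "((\<lambda>\<delta>::real. C * (1 - real (Suc N) powr (-\<delta>))) \<longlongrightarrow> C * (1 - real (Suc N) powr (-0))) (at_right 0)"
    by (intro tendsto_intros) auto
  from order_tendstoD(2)[OF this, of "\<epsilon> / 2"] \<epsilon>
  have "eventually (\<lambda>\<delta>::real. C * (1 - real (Suc N) powr (-\<delta>)) < \<epsilon> / 2) (at_right 0)"
    by simp
  then show "eventually (\<lambda>\<delta>. dist (\<Sum>m. E m * powr_weight \<delta> m) L < \<epsilon>) (at_right 0)"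
    using eventually_at_right_less[of "0::real"]
  proof eventually_elim
    case (elim \<delta>)
    then have \<delta>: "\<delta> > 0" by simp
    have L: "(\<lambda>m. L * powr_weight \<delta> m) sums L"
      using sums_mult[OF powr_weight_sums[OF \<delta>], of L] by simp
    have "(\<Sum>m. E m * powr_weight \<delta> m) - L = (\<Sum>m. (E m - L) * powr_weight \<delta> m)"
      using suminf_diff[OF summable_powr_weight_mult[OF \<delta> M] sums_summable[OF L]] sums_unique[OF L]
      by (simp add: left_diff_distrib)
    also have "\<bar>\<dots>\<bar> \<le> C * (1 - real (Suc N) powr (-\<delta>)) + \<epsilon> / 2"
      using elim C N less_imp_le by (intro abs_suminf_powr_weight_le) auto
    finally show ?case using elim by (simp add: dist_real_def)
  qed
qed

lemma sum_powr_weight_partial_sums: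
  fixes c :: "nat \<Rightarrow> real"
  assumes "c 0 = 0"
  shows "(\<Sum>m<N. (\<Sum>d\<le>Suc m. c d) * powr_weight \<delta> m)
       = (\<Sum>d\<le>N. c d * (real d powr (-\<delta>) - real (Suc N) powr (-\<delta>)))"
proof (induction N)
  case (Suc N)
  let ?x = "\<lambda>n::nat. real n powr (-\<delta>)"
  have "(\<Sum>d\<le>Suc N. c d * (?x d - ?x (Suc (Suc N))))
      = (\<Sum>d\<le>Suc N. c d * (?x d - ?x (Suc N))) + (\<Sum>d\<le>Suc N. c d) * (?x (Suc N) - ?x (Suc (Suc N)))"
    by (simp add: sum_distrib_right sum.distrib[symmetric] algebra_simps)
  then show ?case using Suc by (simp add: powr_weight_def)
qed (use assms in simp)

lemma sum_dyadic_recip_powr_ge: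
  assumes \<delta>: "\<delta> > 0" and N: "N \<ge> 2^K"
  shows "(\<Sum>k=1..K. (2 powr (-\<delta>))^k / real k) \<le> (\<Sum>d\<le>N. dyadic_recip d * real d powr (-\<delta>))"
proof -
  have "(\<Sum>k=1..K. (2 powr (-\<delta>))^k / real k) = (\<Sum>k=1..K. dyadic_recip (2^k) * real ((2::nat)^k) powr (-\<delta>))"
  proof (rule sum.cong)
    fix k assume "k \<in> {1..K}"
    then have "dyadic_recip (2^k) = 1 / real k" unfolding dyadic_recip_def by auto
    moreover have "real ((2::nat)^k) powr (-\<delta>) = (2 powr (-\<delta>))^k"
      by (simp add: powr_realpow[symmetric] powr_powr powr_power mult.commute)
    ultimately show "(2 powr (-\<delta>))^k / real k = dyadic_recip (2^k) * real ((2::nat)^k) powr (-\<delta>)"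
      by simp
  qed simp
  also have "\<dots> = (\<Sum>d\<in>(\<lambda>k. 2^k) ` {1..K}. dyadic_recip d * real d powr (-\<delta>))"
    by (subst sum.reindex) (auto simp: inj_on_def)
  also have "\<dots> \<le> (\<Sum>d\<le>N. dyadic_recip d * real d powr (-\<delta>))"
  proof (rule sum_mono2)
    have "(2::nat)^k \<le> N" if "k \<le> K" for k
      using that N by (meson le_trans one_le_numeral power_increasing)
    then show "(\<lambda>k. 2^k) ` {1..K} \<subseteq> {..N}" by auto
  qed (auto simp: dyadic_recip_nonneg)
  finally show ?thesis .
qed

lemma sum_ln_series_LIMSEQ:
  fixes y :: real
  assumes "0 \<le> y" "y < 1"
  shows "(\<lambda>K. \<Sum>k=1..K. y^k / real k) \<longlonglongrightarrow> - ln (1 - y)"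
proof -
  have "(\<lambda>n. - (- (y^n) / real n)) sums (- ln (1 - y))"
    using ln_series'[of "-y"] assms by (intro sums_minus) simp
  then have "(\<lambda>K. \<Sum>k<Suc K. y^k / real k) \<longlonglongrightarrow> - ln (1 - y)"
    by (intro LIMSEQ_Suc) (simp add: sums_def)
  moreover have "{..<Suc K} = insert 0 {1..K}" for K by auto
  ultimately show ?thesis by simp
qed

definition prime_minus_dyadic :: "nat \<Rightarrow> real" where
  "prime_minus_dyadic n = (\<Sum>d\<le>n. prime_recip d) - (\<Sum>d\<le>n. dyadic_recip d)"

lemma prime_minus_dyadic_LIMSEQ:
  "prime_minus_dyadic \<longlonglongrightarrow> mertens_c1 - (euler_mascheroni - ln (ln 2))"
  using tendsto_diff[OF prime_recip_sum_LIMSEQ_mertens_c1 dyadic_recip_sum_LIMSEQ]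
  unfolding prime_minus_dyadic_def[abs_def] by simp

lemma sum_prime_minus_dyadic_powr_weight_le:
  assumes \<delta>: "\<delta> > 0" and S: "finite S" "\<And>p. p \<in> S \<Longrightarrow> prime p" "S \<subseteq> {..N}"
    and N: "N \<ge> 2^K"
  shows "(\<Sum>m<N. prime_minus_dyadic (Suc m) * powr_weight \<delta> m)
    \<le> ln (1 + 1/\<delta>) - (\<Sum>p\<in>S. prime_log_excess p (1+\<delta>)) - (\<Sum>k=1..K. (2 powr (-\<delta>))^k / real k)
      - prime_minus_dyadic N * real (Suc N) powr (-\<delta>)"
proof -
  have "(\<Sum>m<N. prime_minus_dyadic (Suc m) * powr_weight \<delta> m)
      = (\<Sum>d\<le>N. (prime_recip d - dyadic_recip d) * (real d powr (-\<delta>) - real (Suc N) powr (-\<delta>)))"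
    unfolding prime_minus_dyadic_def sum_subtractf[symmetric]
    by (rule sum_powr_weight_partial_sums) (simp add: prime_recip_def dyadic_recip_def)
  also have "\<dots> = (\<Sum>d\<le>N. prime_recip d * real d powr (-\<delta>)) - (\<Sum>d\<le>N. dyadic_recip d * real d powr (-\<delta>))
      - prime_minus_dyadic N * real (Suc N) powr (-\<delta>)"
    by (simp add: prime_minus_dyadic_def ring_distribs sum_subtractf sum_distrib_right)
  finally show ?thesis
    using sum_prime_recip_powr_le[OF \<delta> S] sum_dyadic_recip_powr_ge[OF \<delta> N] by linarith
qed

lemma suminf_prime_minus_dyadic_powr_weight_le:
  assumes \<delta>: "\<delta> > 0" and S: "finite S" "\<And>p. p \<in> S \<Longrightarrow> prime p"
  shows "(\<Sum>m. prime_minus_dyadic (Suc m) * powr_weight \<delta> m)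
    \<le> ln (1 + 1/\<delta>) - (\<Sum>p\<in>S. prime_log_excess p (1+\<delta>)) + ln (1 - 2 powr (-\<delta>))"
proof -
  define U where "U = ln (1 + 1/\<delta>) - (\<Sum>p\<in>S. prime_log_excess p (1+\<delta>))"
  define y where "y = (2::real) powr (-\<delta>)"
  have y: "0 < y" "y < 1" unfolding y_def using \<delta> by (auto simp: powr_less_one)
  obtain M where M: "\<And>n. \<bar>prime_minus_dyadic n\<bar> \<le> M"
    using convergent_imp_Bseq[OF convergentI[OF prime_minus_dyadic_LIMSEQ]] by (auto simp: Bseq_def)
  have sum: "(\<lambda>N. \<Sum>m<N. prime_minus_dyadic (Suc m) * powr_weight \<delta> m)
      \<longlonglongrightarrow> (\<Sum>m. prime_minus_dyadic (Suc m) * powr_weight \<delta> m)"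
    using M by (intro summable_LIMSEQ summable_powr_weight_mult[OF \<delta>])
  have bound: "(\<Sum>m. prime_minus_dyadic (Suc m) * powr_weight \<delta> m) \<le> U - (\<Sum>k=1..K. y^k / real k)" for K
  proof -
    have lim: "(\<lambda>N. U - (\<Sum>k=1..K. y^k / real k) - prime_minus_dyadic N * real (Suc N) powr (-\<delta>))
        \<longlonglongrightarrow> U - (\<Sum>k=1..K. y^k / real k)"
      using tendsto_diff[OF tendsto_const tendsto_mult[OF prime_minus_dyadic_LIMSEQ Suc_powr_neg_LIMSEQ[OF \<delta>]]]
      by (simp only: mult_zero_right diff_zero)
    have "S \<subseteq> {..n}" "2^K \<le> n" if "n \<ge> Max (insert (2^K) S)" for n
      using S(1) that Max_ge[of "insert (2^K) S"] by fastforce+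
    then have "\<forall>n\<ge>Max (insert (2^K) S). (\<Sum>m<n. prime_minus_dyadic (Suc m) * powr_weight \<delta> m)
        \<le> U - (\<Sum>k=1..K. y^k / real k) - prime_minus_dyadic n * real (Suc n) powr (-\<delta>)"
      unfolding U_def y_def using sum_prime_minus_dyadic_powr_weight_le[OF \<delta> S(1,2)] by blast
    then show ?thesis by (intro LIMSEQ_le[OF sum lim]) blast
  qed
  have "(\<lambda>K. U - (\<Sum>k=1..K. y^k / real k)) \<longlonglongrightarrow> U - (- ln (1 - y))"
    using y by (intro tendsto_diff tendsto_const sum_ln_series_LIMSEQ) auto
  then have "(\<Sum>m. prime_minus_dyadic (Suc m) * powr_weight \<delta> m) \<le> U - (- ln (1 - y))"
    by (rule LIMSEQ_le_const) (use bound in blast)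
  then show ?thesis unfolding U_def y_def by simp
qed

theorem mertens_c1_le:
  assumes S: "finite S" "\<And>p. p \<in> S \<Longrightarrow> prime p"
  shows "mertens_c1 \<le> euler_mascheroni - (\<Sum>p\<in>S. prime_log_excess p 1)"
proof -
  have "((\<lambda>\<delta>::real. ln (1 + 1/\<delta>) - (\<Sum>p\<in>S. prime_log_excess p (1+\<delta>)) + ln (1 - 2 powr (-\<delta>)))
      \<longlongrightarrow> ln (ln 2) - (\<Sum>p\<in>S. prime_log_excess p 1)) (at_right 0)"
  proof -
    have "((\<lambda>\<delta>::real. ln (1 + 1/\<delta>) + ln (1 - 2 powr (-\<delta>))) \<longlongrightarrow> ln (ln 2)) (at_right 0)"
      by real_asymp
    from tendsto_diff[OF this tendsto_sum[OF prime_log_excess_tendsto[OF S(2)]]]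
    show ?thesis by (simp add: algebra_simps)
  qed
  moreover have "((\<lambda>\<delta>. \<Sum>m. prime_minus_dyadic (Suc m) * powr_weight \<delta> m)
      \<longlongrightarrow> mertens_c1 - (euler_mascheroni - ln (ln 2))) (at_right 0)"
    by (rule abelian_powr_weight[OF LIMSEQ_Suc[OF prime_minus_dyadic_LIMSEQ]])
  ultimately have "mertens_c1 - (euler_mascheroni - ln (ln 2)) \<le> ln (ln 2) - (\<Sum>p\<in>S. prime_log_excess p 1)"
  proof (rule tendsto_le[OF trivial_limit_at_right_real])
    show "eventually (\<lambda>\<delta>. (\<Sum>m. prime_minus_dyadic (Suc m) * powr_weight \<delta> m)
        \<le> ln (1 + 1/\<delta>) - (\<Sum>p\<in>S. prime_log_excess p (1+\<delta>)) + ln (1 - 2 powr (-\<delta>))) (at_right 0)"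
      using eventually_at_right_less[of "0::real"]
      by eventually_elim (rule suminf_prime_minus_dyadic_powr_weight_le[OF _ S])
  qed
  then show ?thesis by simp
qed

section \<open>The factor \<open>B(k)\<close>\<close>

lemma pr_prime: "prime (pr l)"
  unfolding pr_def using enumerate_in_set[OF primes_infinite] by simp

lemma pr_less_pr_Suc: "l \<ge> 1 \<Longrightarrow> pr l < pr (Suc l)"
  unfolding pr_def using enumerate_mono_iff[OF primes_infinite] by simp

lemma enumerate_primes_0: "enumerate {p::nat. prime p} 0 = 2"
  by (simp add: enumerate_0 Least_equality prime_ge_2_nat)

lemma pr_1: "pr 1 = 2"
  unfolding pr_def using enumerate_primes_0 by simp

lemma pr_2: "pr 2 = 3"
proof -
  have "pr 2 = enumerate ({p::nat. prime p} - {2}) 0"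
    by (simp add: pr_def enumerate_Suc' enumerate_primes_0)
  also have "\<dots> = 3"
    unfolding enumerate_0
    by (rule Least_equality) (auto simp: prime_ge_2_nat dest: prime_ge_2_nat[of y for y] le_neq_implies_less)
  finally show ?thesis .
qed

lemma pr_3: "pr 3 = 5"
proof -
  have "pr 3 = enumerate {p::nat. prime p} (Suc (Suc 0))" by (simp add: pr_def numeral_3_eq_3)
  also have "\<dots> = enumerate ({p::nat. prime p} - {2} - {pr 2}) 0"
    by (simp add: pr_def enumerate_Suc' enumerate_primes_0)
  also have "\<dots> = 5"
  proof -
    have "\<not> prime (4::nat)" by code_simp
    then have "5 \<le> p" if "prime p" "p \<noteq> 2" "p \<noteq> 3" for p :: nat
      using that prime_ge_2_nat[of p] by (cases "p = 4") auto
    then show ?thesis unfolding enumerate_0 pr_2 by (intro Least_equality) auto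
  qed
  finally show ?thesis .
qed

lemma pr_ge: "l \<ge> 2 \<Longrightarrow> 2 * l - 1 \<le> pr l"
proof (induction l rule: dec_induct)
  case (step n)
  have "pr n < pr (Suc n)" "pr n \<ge> 3" using step pr_less_pr_Suc by auto
  moreover have "odd (pr n)" "odd (pr (Suc n))"
    using prime_odd_nat[OF pr_prime] calculation by auto
  ultimately have "pr n + 2 \<le> pr (Suc n)" by presburger
  then show ?case using step by simp
qed (simp add: pr_2)

definition pr_lower_bound :: "nat \<Rightarrow> nat" where
  "pr_lower_bound l = (if l = 1 then 2 else 2 * l - 1)"

lemma pr_lower_bound_le: "l \<ge> 1 \<Longrightarrow> pr_lower_bound l \<le> pr l"
  unfolding pr_lower_bound_def using pr_1 pr_ge by (cases "l = 1") auto

lemma pr_lower_bound_gt_1: "l \<ge> 1 \<Longrightarrow> real (pr_lower_bound l) > 1"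
  unfolding pr_lower_bound_def by auto

definition euler_factor :: "real \<Rightarrow> real" where
  "euler_factor x = x^2 / (x^2 - 1)"

lemma euler_factor_eq:
  assumes "x > 1"
  shows "euler_factor x = 1 + 1 / (x^2 - 1)"
proof -
  have "x^2 - 1 \<noteq> 0" using one_less_power[OF assms, of 2] by simp
  then show ?thesis unfolding euler_factor_def by (simp add: field_simps)
qed

lemma euler_factor_ge_1: "x > 1 \<Longrightarrow> euler_factor x \<ge> 1"
  by (simp add: euler_factor_eq)

lemma euler_factor_antimono: "1 < x \<Longrightarrow> x \<le> y \<Longrightarrow> euler_factor y \<le> euler_factor x"
  by (simp add: euler_factor_eq divide_left_mono power_mono)

text \<open>\<open>euler_factor (2l - 1) = 1 + (1/(l-1) - 1/l)/4\<close>, so the product telescopes after \<open>1 + t \<le> e\<^sup>t\<close>.\<close>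
lemma prod_euler_factor_odd_le:
  assumes "m \<ge> 1"
  shows "(\<Prod>l=Suc m..n. euler_factor (real (2 * l - 1))) \<le> exp (1 / (4 * real m))"
proof (cases "m \<le> n")
  case True
  have "(\<Prod>l=Suc m..n. euler_factor (real (2 * l - 1)))
      \<le> (\<Prod>l=Suc m..n. exp ((1 / real (l - 1) - 1 / real l) / 4))"
  proof (rule prod_mono)
    fix l assume l: "l \<in> {Suc m..n}"
    then have "real (2 * l - 1) > 1" "real (2 * l - 1) = 2 * real l - 1" using assms by auto
    moreover have "(2 * real l - 1)^2 - 1 = 4 * real l * (real l - 1)"
      by (simp add: power2_eq_square algebra_simps)
    ultimately have "euler_factor (real (2 * l - 1)) = 1 + 1 / (4 * real l * (real l - 1))"
      by (simp add: euler_factor_eq)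
    also have "\<dots> = 1 + (1 / real (l - 1) - 1 / real l) / 4"
      using l assms by (simp add: of_nat_diff field_simps)
    finally have "euler_factor (real (2 * l - 1)) = 1 + (1 / real (l - 1) - 1 / real l) / 4" .
    then show "0 \<le> euler_factor (real (2 * l - 1)) \<and>
        euler_factor (real (2 * l - 1)) \<le> exp ((1 / real (l - 1) - 1 / real l) / 4)"
      using euler_factor_ge_1[OF \<open>real (2 * l - 1) > 1\<close>] exp_ge_add_one_self[of "(1 / real (l - 1) - 1 / real l) / 4"]
      by (simp add: add.commute)
  qed
  also have "\<dots> = exp ((\<Sum>l=Suc m..n. (\<lambda>k. - 1 / real k) l - (\<lambda>k. - 1 / real k) (l - 1)) / 4)"
    by (simp add: exp_sum sum_divide_distrib)
  also have "\<dots> = exp ((1 / real m - 1 / real n) / 4)"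
    using sum_telescope''[OF True, of "\<lambda>k. - 1 / real k"] by simp
  also have "\<dots> \<le> exp (1 / (4 * real m))"
    using True assms by simp
  finally show ?thesis .
qed (use assms in simp)

lemma Bk_le:
  assumes j: "j \<in> {1..10}"
  shows "Bk j k \<le> (\<Prod>l\<in>{1..10} - {j}. euler_factor (real (pr_lower_bound l))) * exp (1/40)"
proof -
  define n where "n = max (k+1) 10"
  let ?f = "\<lambda>l. euler_factor (real (pr_lower_bound l))"
  have f_ge_1: "?f l \<ge> 1" if "l \<ge> 1" for l
    using euler_factor_ge_1[OF pr_lower_bound_gt_1[OF that]] .
  have "Bk j k = (\<Prod>l\<in>{1..k+1} - {j}. euler_factor (real (pr l)))"
    unfolding Bk_def euler_factor_def by simp
  also have "\<dots> \<le> (\<Prod>l\<in>{1..k+1} - {j}. ?f l)"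
  proof (rule prod_mono)
    fix l assume "l \<in> {1..k+1} - {j}"
    then have "1 < real (pr_lower_bound l)" "real (pr_lower_bound l) \<le> real (pr l)"
      using pr_lower_bound_gt_1 pr_lower_bound_le by auto
    then show "0 \<le> euler_factor (real (pr l)) \<and> euler_factor (real (pr l)) \<le> ?f l"
      using euler_factor_ge_1[of "real (pr l)"] euler_factor_antimono by fastforce
  qed
  also have "\<dots> \<le> (\<Prod>l\<in>{1..n} - {j}. ?f l)"
    using f_ge_1 by (intro prod_mono2) (auto simp: n_def intro: order.trans[OF zero_le_one])
  also have "\<dots> = (\<Prod>l\<in>{1..10} - {j}. ?f l) * (\<Prod>l=Suc 10..n. ?f l)"
  proof -
    have "{1..n} - {j} = ({1..10} - {j}) \<union> {Suc 10..n}" using j unfolding n_def by auto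
    moreover have "(\<Prod>l\<in>({1..10} - {j}) \<union> {Suc 10..n}. ?f l)
        = (\<Prod>l\<in>{1..10} - {j}. ?f l) * (\<Prod>l=Suc 10..n. ?f l)"
      by (rule prod.union_disjoint) auto
    ultimately show ?thesis by simp
  qed
  also have "(\<Prod>l=Suc 10..n. ?f l) = (\<Prod>l=Suc 10..n. euler_factor (real (2 * l - 1)))"
    by (rule prod.cong) (auto simp: pr_lower_bound_def)
  also have "(\<Prod>l\<in>{1..10} - {j}. ?f l) * \<dots> \<le> (\<Prod>l\<in>{1..10} - {j}. ?f l) * exp (1/40)"
    using prod_euler_factor_odd_le[of 10 n] f_ge_1
    by (intro mult_left_mono prod_nonneg) (auto intro: order.trans[OF zero_le_one])
  finally show ?thesis .
qed

section \<open>Numerical bounds\<close>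

text \<open>The constants are \<open>\<Prod>\<^sub>p\<^sub>\<le>\<^sub>2\<^sub>3 (1 - 1/p)\<close> and \<open>\<Sum>\<^sub>p\<^sub>\<le>\<^sub>2\<^sub>3 1/p\<close>.\<close>
lemma mertens_c1_le_numeric:
  "mertens_c1 \<le> euler_mascheroni + ln (110592 / 676039) + 334406399 / 223092870"
proof -
  define S :: "nat set" where "S = {2, 3, 5, 7, 11, 13, 17, 19, 23}"
  have "prime (2::nat)" "prime (3::nat)" "prime (5::nat)" "prime (7::nat)" "prime (11::nat)"
       "prime (13::nat)" "prime (17::nat)" "prime (19::nat)" "prime (23::nat)"
    by code_simp+
  then have S: "finite S" "\<And>p. p \<in> S \<Longrightarrow> prime p" unfolding S_def by auto
  have "prime_log_excess p 1 = - ln (1 - 1 / real p) - 1 / real p" if "p \<in> S" for p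
    using prime_gt_0_nat[OF S(2)[OF that]] by (simp add: prime_log_excess_def powr_neg_one)
  then have "(\<Sum>p\<in>S. prime_log_excess p 1) = - (\<Sum>p\<in>S. ln (1 - 1 / real p)) - (\<Sum>p\<in>S. 1 / real p)"
    by (simp add: sum_subtractf sum_negf)
  also have "(\<Sum>p\<in>S. ln (1 - 1 / real p)) = ln (\<Prod>p\<in>S. 1 - 1 / real p)"
    using S prime_gt_1_nat by (subst ln_prod) (auto simp: field_simps)
  finally show ?thesis
    using mertens_c1_le[OF S] unfolding S_def by simp
qed

lemma exp_one_plus_le:
  fixes y :: real
  assumes "0 \<le> y" "y \<le> 8"
  shows "exp (1 + y) \<le> 272/100 * (1 + y/8 + (y/8)^2)^8"
proof -
  have "exp (1 + y) = exp 1 * exp (y/8) ^ 8"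
    by (simp add: exp_add exp_of_nat_mult[symmetric])
  also have "\<dots> \<le> 272/100 * (1 + y/8 + (y/8)^2)^8"
    using assms e_less_272 by (intro mult_mono power_mono exp_bound) auto
  finally show ?thesis .
qed

lemma prod_euler_factor_pr_lower_bound:
  "(\<Prod>l=1..10. euler_factor (real (pr_lower_bound l))) = 10667118605 / 6442450944"
  by (simp add: numeral_eq_Suc atLeastAtMostSuc_conv pr_lower_bound_def euler_factor_def)

lemma Bk_numeric:
  assumes j: "j \<in> {1, 2, 3}"
  shows "110592 / 676039 * (\<Prod>l\<in>{1..10} - {j}. euler_factor (real (pr_lower_bound l)))
           * exp (334406399 / 223092870 - 1 / real (pr j) + 1/40) \<le> 99/100"
proof -
  define y where "y = 334406399 / 223092870 - 1 / real (pr j) + 1/40 - 1"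
  have pr_j: "pr_lower_bound j = pr j" "euler_factor (real (pr j)) > 0"
    using j pr_1 pr_2 pr_3 by (auto simp: pr_lower_bound_def euler_factor_def)
  moreover have "j \<in> {1..10}" using j by auto
  ultimately have R: "(\<Prod>l\<in>{1..10} - {j}. euler_factor (real (pr_lower_bound l)))
      = 10667118605 / 6442450944 / euler_factor (real (pr j))"
    by (simp add: prod_diff1 flip: prod_euler_factor_pr_lower_bound)
  have y: "0 \<le> y" "y \<le> 8" using j pr_1 pr_2 pr_3 by (auto simp: y_def)
  have "110592 / 676039 * (\<Prod>l\<in>{1..10} - {j}. euler_factor (real (pr_lower_bound l)))
        * exp (334406399 / 223092870 - 1 / real (pr j) + 1/40)
      = 110592 / 676039 * (10667118605 / 6442450944 / euler_factor (real (pr j))) * exp (1 + y)"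
    unfolding R by (simp add: y_def)
  also have "\<dots> \<le> 110592 / 676039 * (10667118605 / 6442450944 / euler_factor (real (pr j)))
        * (272/100 * (1 + y/8 + (y/8)^2)^8)"
    using y pr_j(2) by (intro mult_left_mono exp_one_plus_le) auto
  also have "\<dots> \<le> 99/100"
    using j pr_1 pr_2 pr_3 by (auto simp: y_def euler_factor_def eval_nat_numeral power2_eq_square)
  finally show ?thesis .
qed

lemma exp_mertens_c1_Bk_le:
  assumes j: "j \<in> {1, 2, 3}"
  shows "exp (mertens_c1 - 1 / real (pr j)) * Bk j k \<le> 99/100 * exp euler_mascheroni"
proof -
  let ?R = "\<Prod>l\<in>{1..10} - {j}. euler_factor (real (pr_lower_bound l))"
  let ?c = "334406399 / 223092870 - 1 / real (pr j)"
  have "exp (mertens_c1 - 1 / real (pr j))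
      \<le> exp (euler_mascheroni + ln (110592 / 676039) + ?c)"
    using mertens_c1_le_numeric by simp
  also have "\<dots> = exp euler_mascheroni * (110592 / 676039) * exp ?c"
    by (simp add: exp_add)
  finally have c1: "exp (mertens_c1 - 1 / real (pr j)) \<le> exp euler_mascheroni * (110592 / 676039) * exp ?c" .
  have Bk: "0 \<le> Bk j k" "Bk j k \<le> ?R * exp (1/40)"
    using Bk_le[of j k] j pr_prime prime_gt_1_nat
    by (auto simp: Bk_def intro!: prod_nonneg divide_nonneg_nonneg simp: less_imp_le one_less_power)
  have "exp (mertens_c1 - 1 / real (pr j)) * Bk j k
      \<le> exp euler_mascheroni * (110592 / 676039) * exp ?c * (?R * exp (1/40))"
    using c1 Bk by (intro mult_mono) auto
  also have "\<dots> = exp euler_mascheroni * (110592 / 676039 * ?R * exp (?c + 1/40))"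
    by (simp only: exp_add[of ?c "1/40"] mult_ac)
  also have "\<dots> \<le> exp euler_mascheroni * (99/100)"
    using Bk_numeric[OF j] by (intro mult_left_mono) (simp_all add: add.assoc)
  finally show ?thesis by (simp add: mult.commute)
qed

section \<open>Asymptotics of \<open>C(k)\<close> and \<open>D(k)\<close>\<close>

definition Ck_growth :: "real \<Rightarrow> real" where
  "Ck_growth x = ln (x * (ln x + ln (ln x))) * exp (5 / ln (x * (ln x + ln (ln x) - 1)))"

lemma Ck_eq: "Ck j k = Ck_growth (real (k+1)) * exp (mertens_c1 - 1 / real (pr j))"
  unfolding Ck_def Ck_growth_def by (simp add: exp_add mult_ac)

lemma Ck_Bk_less:
  assumes j: "j \<in> {1, 2, 3}" and "0 \<le> Ck_growth (real (k+1))"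
    and less: "99/100 * Ck_growth (real (k+1)) < T"
  shows "Ck j k * Bk j k < exp euler_mascheroni * T"
proof -
  have "Ck j k * Bk j k = Ck_growth (real (k+1)) * (exp (mertens_c1 - 1 / real (pr j)) * Bk j k)"
    by (simp add: Ck_eq)
  also have "\<dots> \<le> Ck_growth (real (k+1)) * (99/100 * exp euler_mascheroni)"
    using assms(2) by (intro mult_left_mono exp_mertens_c1_Bk_le[OF j])
  also have "\<dots> < exp euler_mascheroni * T"
    using less by simp
  finally show ?thesis .
qed

lemma eventually_Ck_growth_less:
  "eventually (\<lambda>x. 0 \<le> Ck_growth x
     \<and> 0 < x * (ln x + ln (ln x) - 1) * ln (251/100) - ln 5
     \<and> 99/100 * Ck_growth x < ln (x * (ln x + ln (ln x) - 1) * ln (251/100) - ln 5)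
     \<and> 99/100 * Ck_growth x < ln ((x - 1) * ln 2)) at_top"
proof -
  have "eventually (\<lambda>x::real. 0 \<le> ln (x * (ln x + ln (ln x)))) at_top" by real_asymp
  moreover have "eventually (\<lambda>x::real. 0 < x * (ln x + ln (ln x) - 1) * ln (251/100) - ln 5) at_top"
    by real_asymp
  moreover have "eventually (\<lambda>x::real. 99/100 * (ln (x * (ln x + ln (ln x))) * exp (5 / ln (x * (ln x + ln (ln x) - 1))))
      < ln (x * (ln x + ln (ln x) - 1) * ln (251/100) - ln 5)) at_top"
    by real_asymp
  moreover have "eventually (\<lambda>x::real. 99/100 * (ln (x * (ln x + ln (ln x))) * exp (5 / ln (x * (ln x + ln (ln x) - 1))))
      < ln ((x - 1) * ln 2)) at_top"
    by real_asymp
  ultimately show ?thesis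
    unfolding Ck_growth_def by eventually_elim simp
qed

lemma Dk_ge:
  assumes j: "j \<in> {1, 2, 3}" and x: "x = real (k+1)"
    and pos: "0 < x * (ln x + ln (ln x) - 1) * ln (251/100) - ln 5"
  shows "ln (x * (ln x + ln (ln x) - 1) * ln (251/100) - ln 5) \<le> Dk j k"
proof -
  have "ln (real (pr j)) \<le> ln 5" using j pr_1 pr_2 pr_3 by auto
  then show ?thesis using pos unfolding Dk_def x by (subst ln_le_cancel_iff) auto
qed

lemma ln_prod_pr_div_ge:
  assumes "j \<in> {1..k+1}"
  shows "real k * ln 2 \<le> ln (real ((\<Prod>l=1..k+1. pr l) div pr j))"
proof -
  have pr_pos: "pr l > 0" for l using prime_gt_0_nat[OF pr_prime] .
  have "(\<Prod>l=1..k+1. pr l) = pr j * (\<Prod>l\<in>{1..k+1} - {j}. pr l)"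
    by (rule prod.remove) (use assms in simp_all)
  then have "real ((\<Prod>l=1..k+1. pr l) div pr j) = (\<Prod>l\<in>{1..k+1} - {j}. real (pr l))"
    using pr_pos[of j] by simp
  then have "ln (real ((\<Prod>l=1..k+1. pr l) div pr j)) = (\<Sum>l\<in>{1..k+1} - {j}. ln (real (pr l)))"
    using pr_pos by (simp add: ln_prod)
  also have "\<dots> \<ge> (\<Sum>l\<in>{1..k+1} - {j}. ln 2)"
  proof (rule sum_mono)
    fix l
    have "pr l \<ge> 2" using prime_ge_2_nat[OF pr_prime] .
    then show "ln 2 \<le> ln (real (pr l))" by simp
  qed
  moreover have "card ({1..k+1} - {j}) = k" using assms by simp
  ultimately show ?thesis by simp
qed

lemma eventually_Ck_Bk_less:
  assumes j: "j \<in> {1, 2, 3}"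
  shows "eventually (\<lambda>k. Ck j k * Bk j k < exp euler_mascheroni * Dk j k
           \<and> Ck j k * Bk j k < exp euler_mascheroni * ln (real k * ln 2)) sequentially"
proof -
  have "filterlim (\<lambda>k::nat. real (Suc k)) at_top sequentially"
    by (rule filterlim_compose[OF filterlim_real_sequentially filterlim_Suc])
  from eventually_compose_filterlim[OF eventually_Ck_growth_less this]
  show ?thesis
  proof eventually_elim
    case (elim k)
    then show ?case using Dk_ge[OF j refl, of k] by (auto intro!: Ck_Bk_less[OF j])
  qed
qed

theorem mainTheorem11:
  fixes j :: nat
  assumes "j \<in> {1, 2, 3}"
  shows "\<exists>K::nat.
           (\<forall>k\<ge>K. Ck j k * Bk j k < exp euler_mascheroni * Dk j k) \<and>
           (\<forall>k\<ge>max K 99. \<forall>m::nat. m = (\<Prod>l=1..k+1. pr l) div pr j \<longrightarrow>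
                Ck j k * Bk j k < exp euler_mascheroni * ln (ln (real m)))"
proof -
  obtain K where K: "\<And>k. k \<ge> K \<Longrightarrow> Ck j k * Bk j k < exp euler_mascheroni * Dk j k
      \<and> Ck j k * Bk j k < exp euler_mascheroni * ln (real k * ln 2)"
    using eventually_Ck_Bk_less[OF assms] unfolding eventually_sequentially by blast
  show ?thesis
  proof (intro exI[of _ K] conjI allI impI)
    fix k assume "k \<ge> K"
    then show "Ck j k * Bk j k < exp euler_mascheroni * Dk j k" using K by blast
  next
    fix k m assume k: "k \<ge> max K 99" and m: "m = (\<Prod>l=1..k+1. pr l) div pr j"
    have "real k * ln 2 \<le> ln (real m)"
      using ln_prod_pr_div_ge[of j k] assms k unfolding m by auto
    moreover have "0 < real k * ln 2" using k by simp
    ultimately have "exp euler_mascheroni * ln (real k * ln 2) \<le> exp euler_mascheroni * ln (ln (real m))"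
      by simp
    moreover have "Ck j k * Bk j k < exp euler_mascheroni * ln (real k * ln 2)" using K k by simp
    ultimately show "Ck j k * Bk j k < exp euler_mascheroni * ln (ln (real m))" by linarith
  qed
qed

end
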